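(* Let $R$ be a nontrivial locally finite commutative ring, $\Sigma$ an alphabet, $L\in\mathrm{RevL}(R,\Sigma)$ a language, and $M_L$ the syntactic monoid of $L$. Then the idempotents of $M_L$ commute, i.e., $M_L\in\mathbf{ECom}$.
   Context: A ring is a semiring $(R,+,\cdot,0,1)$ whose additive monoid is an abelian group; nontrivial means $0\neq1$; it is locally finite if every subsemiring generated by a finite subset is finite. For a semiring $S$ and finite nonempty alphabet $\Sigma$, a series is a map $r\colon\Sigma^*\to S$ with value $(r,w)$ and support $\mathrm{supp}(r)=\{w\mid(r,w)\neq0\}$. A weighted automaton over $S$ and $\Sigma$ is $\mathcal{A}=(Q,\sigma,\iota,\tau)$ with $Q$ finite, $\sigma\colon Q\times\Sigma\times Q\to S$, $\iota,\tau\colon Q\to S$; a run on $w=a_1\cdots a_t$ is $q_0a_1q_1\cdots a_tq_t$ with all $\sigma(q_{k-1},a_k,q_k)\neq0$, of weight $\iota(q_0)\sigma(q_0,a_1,q_1)\cdots\sigma(q_{t-1},a_t,q_t)\tau(q_t)$, and $(\|\mathcal{A}\|,w)$ is the sum of weights of all runs on $w$. $\mathcal{A}$ is reversible if for all $p,p',q,q'\in Q$, $a\in\Sigma$: $\sigma(p,a,q)\neq0\neq\sigma(p,a,q')$ implies $q=q'$, and $\sigma(p,a,q)\neq0\neq\sigma(p',a,q)$ implies $p=p'$. $\mathrm{RevL}(S,\Sigma)$ is the set of supports of series realised by reversible weighted automata over $S$ and $\Sigma$. The syntactic monoid $M_L$ is $\Sigma^*/\!\sim_L$ with $u\sim_L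 v$ iff $xuy\in L\Leftrightarrow xvy\in L$ for all $x,y\in\Sigma^*$. $\mathbf{ECom}$ is the pseudovariety of finite monoids whose idempotents commute. *)

theory Defs
  imports Main "HOL-Algebra.Group"
begin

inductive_set gen_subsemiring :: "'a::semiring_1 set \<Rightarrow> 'a set" for A where
  gen_base: "x \<in> A \<Longrightarrow> x \<in> gen_subsemiring A"
| gen_zero: "0 \<in> gen_subsemiring A"
| gen_one: "1 \<in> gen_subsemiring A"
| gen_add: "x \<in> gen_subsemiring A \<Longrightarrow> y \<in> gen_subsemiring A \<Longrightarrow> x + y \<in> gen_subsemiring A"
| gen_mult: "x \<in> gen_subsemiring A \<Longrightarrow> y \<in> gen_subsemiring A \<Longrightarrow> x * y \<in> gen_subsemiring A"

definition locally_finite :: "'a::semiring_1 itself \<Rightarrow> bool" where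
  "locally_finite _ \<longleftrightarrow> (\<forall>A :: 'a set. finite A \<longrightarrow> finite (gen_subsemiring A))"

definition is_run :: "nat set \<Rightarrow> (nat \<Rightarrow> 'b \<Rightarrow> nat \<Rightarrow> 'a::zero) \<Rightarrow> 'b list \<Rightarrow> nat list \<Rightarrow> bool" where
  "is_run Q \<sigma> w qs \<longleftrightarrow> length qs = Suc (length w) \<and> set qs \<subseteq> Q \<and>
     (\<forall>k < length w. \<sigma> (qs ! k) (w ! k) (qs ! Suc k) \<noteq> 0)"

definition run_weight :: "(nat \<Rightarrow> 'b \<Rightarrow> nat \<Rightarrow> 'a::comm_semiring_1) \<Rightarrow> (nat \<Rightarrow> 'a) \<Rightarrow> (nat \<Rightarrow> 'a)
    \<Rightarrow> 'b list \<Rightarrow> nat list \<Rightarrow> 'a" where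
  "run_weight \<sigma> \<iota> \<tau> w qs =
     \<iota> (qs ! 0) * (\<Prod>k < length w. \<sigma> (qs ! k) (w ! k) (qs ! Suc k)) * \<tau> (qs ! length w)"

definition behaviour :: "nat set \<Rightarrow> (nat \<Rightarrow> 'b \<Rightarrow> nat \<Rightarrow> 'a::comm_semiring_1) \<Rightarrow> (nat \<Rightarrow> 'a)
    \<Rightarrow> (nat \<Rightarrow> 'a) \<Rightarrow> 'b list \<Rightarrow> 'a" where
  "behaviour Q \<sigma> \<iota> \<tau> w = (\<Sum>qs \<in> {qs. is_run Q \<sigma> w qs}. run_weight \<sigma> \<iota> \<tau> w qs)"

definition reversible :: "nat set \<Rightarrow> (nat \<Rightarrow> 'b \<Rightarrow> nat \<Rightarrow> 'a::zero) \<Rightarrow> bool" where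
  "reversible Q \<sigma> \<longleftrightarrow>
     (\<forall>p\<in>Q. \<forall>q\<in>Q. \<forall>q'\<in>Q. \<forall>a. \<sigma> p a q \<noteq> 0 \<and> \<sigma> p a q' \<noteq> 0 \<longrightarrow> q = q') \<and>
     (\<forall>p\<in>Q. \<forall>p'\<in>Q. \<forall>q\<in>Q. \<forall>a. \<sigma> p a q \<noteq> 0 \<and> \<sigma> p' a q \<noteq> 0 \<longrightarrow> p = p')"

definition RevL :: "'a::comm_semiring_1 itself \<Rightarrow> ('b::finite) list set set" where
  "RevL _ = {{w. behaviour Q \<sigma> \<iota> \<tau> w \<noteq> (0::'a)} | Q \<sigma> \<iota> \<tau>. finite Q \<and> reversible Q \<sigma>}"

definition synt_cong :: "'b list set \<Rightarrow> 'b list \<Rightarrow> 'b list \<Rightarrow> bool" where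
  "synt_cong L u v \<longleftrightarrow> (\<forall>x y. x @ u @ y \<in> L \<longleftrightarrow> x @ v @ y \<in> L)"

definition synt_class :: "'b list set \<Rightarrow> 'b list \<Rightarrow> 'b list set" where
  "synt_class L u = {v. synt_cong L v u}"

definition syntactic_monoid :: "'b list set \<Rightarrow> 'b list set monoid" where
  "syntactic_monoid L = \<lparr> carrier = range (synt_class L),
     mult = (\<lambda>X Y. {w. \<exists>x\<in>X. \<exists>y\<in>Y. synt_cong L w (x @ y)}),
     one = synt_class L [] \<rparr>"

definition in_ECom :: "('m, 'x) monoid_scheme \<Rightarrow> bool" where
  "in_ECom M \<longleftrightarrow> monoid M \<and> finite (carrier M) \<and>
     (\<forall>e\<in>carrier M. \<forall>f\<in>carrier M. e \<otimes>\<^bsub>M\<^esub> e = e \<and> f \<otimes>\<^bsub>M\<^esub> f = f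
        \<longrightarrow> e \<otimes>\<^bsub>M\<^esub> f = f \<otimes>\<^bsub>M\<^esub> e)"

end

theory Submission
  imports Defs
begin

(*
  In a reversible automaton every letter acts on the states as a partial injection, so a word w
  has at most one run from each state p; recording its end state and weight turns w into a
  weighted partial injection, and the behaviour on w depends only on this transformation.
  Concatenation corresponds to composition, and all weights lie in the subsemiring generated by
  the finitely many transition weights, which is finite by local finiteness.  Hence these
  transformations form a finite monoid recognising L.  An idempotent partial injection is the
  identity on its domain, so two idempotent ones act diagonally and commute because the weights
  do.  Every idempotent of M_L is the class of a word u with u ~ uu, and some power of u is
  idempotent in the finite monoid while having the same class as u; so the idempotents of M_L
  commute as well.
*)

lemma synt_cong_refl: "synt_cong L u u"
  unfolding synt_cong_def by simp

lemma synt_cong_sym: "synt_cong L u v \<Longrightarrow> synt_cong L v u"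
  unfolding synt_cong_def by simp

lemma synt_cong_trans: "synt_cong L u v \<Longrightarrow> synt_cong L v w \<Longrightarrow> synt_cong L u w"
  unfolding synt_cong_def by simp

lemma synt_cong_append:
  assumes "synt_cong L u u'" and "synt_cong L v v'"
  shows "synt_cong L (u @ v) (u' @ v')"
  unfolding synt_cong_def
proof (intro allI)
  fix x y
  have "x @ (u @ v) @ y \<in> L \<longleftrightarrow> x @ u' @ (v @ y) \<in> L"
    using assms(1) unfolding synt_cong_def by simp
  also have "\<dots> \<longleftrightarrow> (x @ u') @ v' @ y \<in> L"
    using assms(2) unfolding synt_cong_def by (simp only: append.assoc[symmetric])
  finally show "x @ (u @ v) @ y \<in> L \<longleftrightarrow> x @ (u' @ v') @ y \<in> L" by simp
qed

lemma synt_class_eq_iff: "synt_class L u = synt_class L v \<longleftrightarrow> synt_cong L u v"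
proof
  assume "synt_class L u = synt_class L v"
  then show "synt_cong L u v"
    unfolding synt_class_def using synt_cong_refl by blast
qed (auto simp: synt_class_def intro: synt_cong_trans synt_cong_sym)

lemma synt_class_mult:
  "synt_class L u \<otimes>\<^bsub>syntactic_monoid L\<^esub> synt_class L v = synt_class L (u @ v)"
proof (rule Set.set_eqI, rule iffI)
  fix w assume "w \<in> synt_class L u \<otimes>\<^bsub>syntactic_monoid L\<^esub> synt_class L v"
  then obtain x y where "synt_cong L x u" "synt_cong L y v" "synt_cong L w (x @ y)"
    unfolding syntactic_monoid_def synt_class_def by auto
  then show "w \<in> synt_class L (u @ v)"
    unfolding synt_class_def using synt_cong_append synt_cong_trans by blast
qed (auto simp: syntactic_monoid_def synt_class_def intro: synt_cong_refl)

lemma carrier_syntactic_monoid: "carrier (syntactic_monoid L) = range (synt_class L)"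
  unfolding syntactic_monoid_def by simp

lemma one_syntactic_monoid: "\<one>\<^bsub>syntactic_monoid L\<^esub> = synt_class L []"
  unfolding syntactic_monoid_def by simp

lemma monoid_syntactic_monoid: "monoid (syntactic_monoid L)"
  by (rule monoidI)
    (auto simp: carrier_syntactic_monoid one_syntactic_monoid synt_class_mult)

lemma synt_cong_power:
  assumes "synt_cong L (u @ u) u" and "n \<ge> 1"
  shows "synt_cong L (concat (replicate n u)) u"
  using assms(2)
proof (induction n rule: dec_induct)
  case (step n)
  then have "synt_cong L (u @ concat (replicate n u)) (u @ u)"
    using synt_cong_append synt_cong_refl by blast
  then show ?case using assms(1) synt_cong_trans by auto
qed (simp add: synt_cong_refl)

lemma finite_carrier_syntactic_monoid:
  assumes "finite (range \<phi>)" and "\<And>u v. \<phi> u = \<phi> v \<Longrightarrow> synt_cong L u v"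
  shows "finite (carrier (syntactic_monoid L))"
proof -
  have "synt_class L u = synt_class L (inv_into UNIV \<phi> (\<phi> u))" for u
    using assms(2) f_inv_into_f[of "\<phi> u" \<phi> UNIV] synt_class_eq_iff synt_cong_sym by blast
  then have "range (synt_class L) = range (\<lambda>u. synt_class L (inv_into UNIV \<phi> (\<phi> u)))" by simp
  then show ?thesis
    using finite_range_imageI[OF assms(1)] by (simp add: carrier_syntactic_monoid)
qed

lemma idempotent_index_exists:
  fixes P :: "nat \<Rightarrow> 'x"
  assumes "finite (range P)" and shift: "\<And>a b t. P a = P b \<Longrightarrow> P (a + t) = P (b + t)"
  shows "\<exists>m\<ge>1. P (m + m) = P m"
proof -
  have "\<not> inj P"
    using assms(1) finite_imageD infinite_UNIV_nat by blast
  then obtain a b where "a < b" "P a = P b"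
    unfolding inj_def by (metis linorder_neqE_nat)
  define p where "p = b - a"
  have "a + p = b" using \<open>a < b\<close> by (simp add: p_def)
  have period: "P (a + t + k * p) = P (a + t)" for t k
  proof (induction k)
    case (Suc k)
    have "P (a + t + Suc k * p) = P (b + (t + k * p))"
      by (simp flip: \<open>a + p = b\<close> add: algebra_simps)
    also have "\<dots> = P (a + (t + k * p))" using shift \<open>P a = P b\<close> by metis
    finally show ?case using Suc by (simp add: add.assoc)
  qed simp
  \<comment> \<open>\<open>P\<close> is periodic with period \<open>p\<close> from \<open>a\<close> on; take a multiple of \<open>p\<close> beyond \<open>a\<close>.\<close>
  define m where "m = Suc a * p"
  have "p \<ge> 1" using \<open>a < b\<close> by (simp add: p_def)
  then have "m \<ge> Suc a" unfolding m_def using mult_le_mono2[of 1 p "Suc a"] by simp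
  then have "a + (m - a) + Suc a * p = m + m" by (simp add: m_def)
  then have "P (m + m) = P m"
    using period[of "m - a" "Suc a"] \<open>m \<ge> Suc a\<close> by simp
  moreover have "m \<ge> 1" using \<open>m \<ge> Suc a\<close> by simp
  ultimately show ?thesis by blast
qed

lemma idempotent_power_exists:
  fixes \<phi> :: "'b list \<Rightarrow> 'm"
  assumes "finite (range \<phi>)" and "\<And>x x' y. \<phi> x = \<phi> x' \<Longrightarrow> \<phi> (x @ y) = \<phi> (x' @ y)"
  shows "\<exists>m\<ge>1. \<phi> (concat (replicate m u) @ concat (replicate m u)) = \<phi> (concat (replicate m u))"
proof -
  have "finite (range (\<lambda>n. \<phi> (concat (replicate n u))))"
    using assms(1) by (rule finite_subset[rotated]) auto
  moreover have "\<phi> (concat (replicate (a + t) u)) = \<phi> (concat (replicate (b + t) u))"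
    if "\<phi> (concat (replicate a u)) = \<phi> (concat (replicate b u))" for a b t
    using assms(2)[OF that] by (simp add: replicate_add)
  ultimately obtain m where "m \<ge> 1"
    and "\<phi> (concat (replicate (m + m) u)) = \<phi> (concat (replicate m u))"
    using idempotent_index_exists[of "\<lambda>n. \<phi> (concat (replicate n u))"] by blast
  then show ?thesis by (auto simp: replicate_add)
qed

lemma in_ECom_syntactic_monoidI:
  fixes \<phi> :: "'b list \<Rightarrow> 'm" and mul :: "'m \<Rightarrow> 'm \<Rightarrow> 'm"
  assumes hom: "\<And>x y. \<phi> (x @ y) = mul (\<phi> x) (\<phi> y)"
    and recognises: "\<And>u v. \<phi> u = \<phi> v \<Longrightarrow> synt_cong L u v"
    and fin: "finite (range \<phi>)"
    and idem_comm: "\<And>e f. e \<in> range \<phi> \<Longrightarrow> f \<in> range \<phi> \<Longrightarrow> mul e e = e \<Longrightarrow> mul f f = f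
      \<Longrightarrow> mul e f = mul f e"
  shows "in_ECom (syntactic_monoid L)"
proof -
  have idempotent_power:
    "\<exists>m\<ge>1. \<phi> (concat (replicate m u) @ concat (replicate m u)) = \<phi> (concat (replicate m u))" for u
    using fin by (rule idempotent_power_exists) (simp add: hom)
  have idempotents_commute: "synt_cong L (u @ v) (v @ u)"
    if "synt_cong L (u @ u) u" and "synt_cong L (v @ v) v" for u v
  proof -
    obtain m n where "m \<ge> 1" "n \<ge> 1"
      and u_idem: "\<phi> (concat (replicate m u) @ concat (replicate m u)) = \<phi> (concat (replicate m u))"
      and v_idem: "\<phi> (concat (replicate n v) @ concat (replicate n v)) = \<phi> (concat (replicate n v))"
      using idempotent_power by meson
    have "\<phi> (concat (replicate m u) @ concat (replicate n v)) =
        \<phi> (concat (replicate n v) @ concat (replicate m u))"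
      using idem_comm[OF rangeI rangeI u_idem[unfolded hom] v_idem[unfolded hom]] by (simp only: hom)
    then have "synt_cong L (concat (replicate m u) @ concat (replicate n v))
        (concat (replicate n v) @ concat (replicate m u))"
      by (rule recognises)
    moreover have "synt_cong L (concat (replicate m u)) u" "synt_cong L (concat (replicate n v)) v"
      using synt_cong_power that \<open>m \<ge> 1\<close> \<open>n \<ge> 1\<close> by blast+
    ultimately show ?thesis
      by (blast intro: synt_cong_append synt_cong_sym synt_cong_trans)
  qed
  have "e \<otimes>\<^bsub>syntactic_monoid L\<^esub> f = f \<otimes>\<^bsub>syntactic_monoid L\<^esub> e"
    if classes: "e \<in> range (synt_class L)" "f \<in> range (synt_class L)"
      and idempotent: "e \<otimes>\<^bsub>syntactic_monoid L\<^esub> e = e" "f \<otimes>\<^bsub>syntactic_monoid L\<^esub> f = f" for e f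
  proof -
    obtain u v where "e = synt_class L u" "f = synt_class L v" using classes by blast
    moreover from this idempotent have "synt_cong L (u @ u) u" "synt_cong L (v @ v) v"
      by (simp_all add: synt_class_mult synt_class_eq_iff)
    ultimately show ?thesis
      using idempotents_commute by (simp add: synt_class_mult synt_class_eq_iff)
  qed
  then show ?thesis
    unfolding in_ECom_def carrier_syntactic_monoid[symmetric]
    using monoid_syntactic_monoid finite_carrier_syntactic_monoid[OF fin recognises] by blast
qed

definition wcomp :: "('q \<Rightarrow> ('q \<times> 'a::times) option) \<Rightarrow> ('q \<Rightarrow> ('q \<times> 'a) option) \<Rightarrow> 'q \<Rightarrow> ('q \<times> 'a) option" where
  "wcomp f g p = (case f p of None \<Rightarrow> None | Some (q, c) \<Rightarrow> map_option (\<lambda>(r, d). (r, c * d)) (g q))"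

definition partial_inj :: "('q \<Rightarrow> ('q \<times> 'a) option) \<Rightarrow> bool" where
  "partial_inj f \<longleftrightarrow> (\<forall>p p' q c c'. f p = Some (q, c) \<longrightarrow> f p' = Some (q, c') \<longrightarrow> p = p')"

lemma idempotent_partial_inj_fixes:
  assumes "partial_inj f" and "wcomp f f = f" and "f p = Some (q, c)"
  shows "q = p"
proof -
  have "wcomp f f p = Some (q, c)" using assms(2,3) by simp
  then obtain d where "f q = Some (q, d)"
    using assms(3) by (auto simp: wcomp_def split: option.splits)
  then show ?thesis using assms(1,3) unfolding partial_inj_def by blast
qed

lemma idempotent_partial_injs_commute:
  fixes f g :: "'q \<Rightarrow> ('q \<times> 'a::ab_semigroup_mult) option"
  assumes "partial_inj f" "wcomp f f = f" and "partial_inj g" "wcomp g g = g"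
  shows "wcomp f g = wcomp g f"
proof
  fix p
  have "f p = None \<or> (\<exists>c. f p = Some (p, c))" "g p = None \<or> (\<exists>d. g p = Some (p, d))"
    using idempotent_partial_inj_fixes[OF assms(1,2)] idempotent_partial_inj_fixes[OF assms(3,4)]
    by (metis not_None_eq surj_pair)+
  then show "wcomp f g p = wcomp g f p"
    by (auto simp: wcomp_def mult.commute)
qed

definition next_state :: "nat set \<Rightarrow> (nat \<Rightarrow> 'b \<Rightarrow> nat \<Rightarrow> 'a::zero) \<Rightarrow> nat \<Rightarrow> 'b \<Rightarrow> nat option" where
  "next_state Q \<sigma> p a =
     (if p \<in> Q \<and> (\<exists>q\<in>Q. \<sigma> p a q \<noteq> 0) then Some (SOME q. q \<in> Q \<and> \<sigma> p a q \<noteq> 0) else None)"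

lemma next_state_SomeD:
  assumes "next_state Q \<sigma> p a = Some q"
  shows "p \<in> Q" "q \<in> Q" "\<sigma> p a q \<noteq> 0"
proof -
  have "p \<in> Q \<and> (\<exists>q\<in>Q. \<sigma> p a q \<noteq> 0)" and q: "q = (SOME q. q \<in> Q \<and> \<sigma> p a q \<noteq> 0)"
    using assms unfolding next_state_def by (auto split: if_splits)
  then show "p \<in> Q" "q \<in> Q" "\<sigma> p a q \<noteq> 0"
    using someI_ex[of "\<lambda>q. q \<in> Q \<and> \<sigma> p a q \<noteq> 0"] by auto
qed

lemma next_state_eq_Some_iff:
  assumes "reversible Q \<sigma>" and "p \<in> Q" "q \<in> Q"
  shows "next_state Q \<sigma> p a = Some q \<longleftrightarrow> \<sigma> p a q \<noteq> 0"
proof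
  assume "\<sigma> p a q \<noteq> 0"
  then have "next_state Q \<sigma> p a \<noteq> None"
    using assms(2,3) unfolding next_state_def by auto
  then obtain q' where "next_state Q \<sigma> p a = Some q'" by blast
  with \<open>\<sigma> p a q \<noteq> 0\<close> show "next_state Q \<sigma> p a = Some q"
    using assms next_state_SomeD[of Q \<sigma> p a q'] unfolding reversible_def by blast
qed (rule next_state_SomeD)

lemma next_state_inj:
  assumes "reversible Q \<sigma>"
    and "next_state Q \<sigma> p a = Some q" "next_state Q \<sigma> p' a = Some q"
  shows "p = p'"
  using assms next_state_SomeD[OF assms(2)] next_state_SomeD[OF assms(3)]
  unfolding reversible_def by blast

fun run_from :: "nat set \<Rightarrow> (nat \<Rightarrow> 'b \<Rightarrow> nat \<Rightarrow> 'a::zero) \<Rightarrow> 'b list \<Rightarrow> nat \<Rightarrow> nat list option" where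
  "run_from Q \<sigma> [] p = (if p \<in> Q then Some [p] else None)"
| "run_from Q \<sigma> (a # w) p = (case next_state Q \<sigma> p a of None \<Rightarrow> None
     | Some q \<Rightarrow> map_option (Cons p) (run_from Q \<sigma> w q))"

fun word_trans :: "nat set \<Rightarrow> (nat \<Rightarrow> 'b \<Rightarrow> nat \<Rightarrow> 'a::comm_semiring_1) \<Rightarrow> 'b list \<Rightarrow> nat \<Rightarrow> (nat \<times> 'a) option" where
  "word_trans Q \<sigma> [] p = (if p \<in> Q then Some (p, 1) else None)"
| "word_trans Q \<sigma> (a # w) p = (case next_state Q \<sigma> p a of None \<Rightarrow> None
     | Some q \<Rightarrow> map_option (\<lambda>(r, d). (r, \<sigma> p a q * d)) (word_trans Q \<sigma> w q))"

lemma is_run_Nil: "is_run Q \<sigma> [] qs \<longleftrightarrow> (\<exists>p\<in>Q. qs = [p])"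
  unfolding is_run_def by (auto simp: length_Suc_conv)

lemma not_is_run_Nil: "\<not> is_run Q \<sigma> w []"
  unfolding is_run_def by simp

lemma is_run_Cons:
  "is_run Q \<sigma> (a # w) (p # qs) \<longleftrightarrow> p \<in> Q \<and> qs \<noteq> [] \<and> \<sigma> p a (hd qs) \<noteq> 0 \<and> is_run Q \<sigma> w qs"
  unfolding is_run_def
  by (cases qs) (auto simp: less_Suc_eq_0_disj)

lemma run_from_nth_0: "run_from Q \<sigma> w p = Some qs \<Longrightarrow> qs ! 0 = p"
  by (induction w arbitrary: p qs) (auto split: if_splits option.splits)

lemma run_from_eq_Some_iff:
  assumes "reversible Q \<sigma>"
  shows "run_from Q \<sigma> w p = Some qs \<longleftrightarrow> is_run Q \<sigma> w qs \<and> hd qs = p"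
proof (induction w arbitrary: p qs)
  case Nil
  then show ?case by (auto simp: is_run_Nil)
next
  case (Cons a w)
  show ?case
  proof (cases qs)
    case Nil
    then show ?thesis by (auto simp: not_is_run_Nil split: option.splits)
  next
    case (Cons p' qs')
    have "run_from Q \<sigma> (a # w) p = Some qs \<longleftrightarrow>
        (\<exists>q. next_state Q \<sigma> p a = Some q \<and> run_from Q \<sigma> w q = Some qs') \<and> p' = p"
      using Cons by (auto split: option.splits)
    also have "\<dots> \<longleftrightarrow> next_state Q \<sigma> p a = Some (hd qs') \<and> is_run Q \<sigma> w qs' \<and> p' = p"
      using Cons.IH by auto
    also have "\<dots> \<longleftrightarrow> p \<in> Q \<and> qs' \<noteq> [] \<and> \<sigma> p a (hd qs') \<noteq> 0 \<and> is_run Q \<sigma> w qs' \<and> p' = p"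
    proof -
      have "hd qs' \<in> Q" if "is_run Q \<sigma> w qs'"
        using that not_is_run_Nil[of Q \<sigma> w] unfolding is_run_def by (metis hd_in_set subsetD)
      then show ?thesis
        using next_state_eq_Some_iff[OF assms] next_state_SomeD(1) not_is_run_Nil by metis
    qed
    also have "\<dots> \<longleftrightarrow> is_run Q \<sigma> (a # w) qs \<and> hd qs = p"
      using Cons by (auto simp: is_run_Cons)
    finally show ?thesis .
  qed
qed

lemma word_trans_eq_run_from:
  "word_trans Q \<sigma> w p = map_option (\<lambda>qs. (qs ! length w, \<Prod>k<length w. \<sigma> (qs ! k) (w ! k) (qs ! Suc k)))
     (run_from Q \<sigma> w p)"
proof (induction w arbitrary: p)
  case (Cons a w)
  show ?case
  proof (cases "next_state Q \<sigma> p a")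
    case (Some q)
    have "\<sigma> p a q * (\<Prod>k<length w. \<sigma> (qs ! k) (w ! k) (qs ! Suc k)) =
        (\<Prod>k<length (a # w). \<sigma> ((p # qs) ! k) ((a # w) ! k) ((p # qs) ! Suc k))"
      if "run_from Q \<sigma> w q = Some qs" for qs
      using run_from_nth_0[OF that] by (simp add: prod.lessThan_Suc_shift del: prod.lessThan_Suc)
    then show ?thesis
      using Some Cons.IH by (auto simp: option.map_comp comp_def intro!: option.map_cong)
  qed simp
qed simp

lemma behaviour_eq_sum_word_trans:
  assumes "finite Q" and rev: "reversible Q \<sigma>"
  shows "behaviour Q \<sigma> \<iota> \<tau> w =
    (\<Sum>p\<in>Q. case word_trans Q \<sigma> w p of None \<Rightarrow> 0 | Some (q, c) \<Rightarrow> \<iota> p * c * \<tau> q)"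
proof -
  let ?runs = "\<lambda>p. set_option (run_from Q \<sigma> w p)"
  have runs: "{qs. is_run Q \<sigma> w qs} = (\<Union>p\<in>Q. ?runs p)"
  proof (intro Set.set_eqI iffI)
    fix qs assume "qs \<in> {qs. is_run Q \<sigma> w qs}"
    moreover from this have "hd qs \<in> Q"
      unfolding is_run_def by (cases qs) auto
    ultimately show "qs \<in> (\<Union>p\<in>Q. ?runs p)"
      using run_from_eq_Some_iff[OF rev] by force
  qed (auto simp: run_from_eq_Some_iff[OF rev])
  have disjoint: "?runs p \<inter> ?runs p' = {}" if "p \<noteq> p'" for p p'
    using that run_from_eq_Some_iff[OF rev] by auto
  have "behaviour Q \<sigma> \<iota> \<tau> w = (\<Sum>p\<in>Q. \<Sum>qs\<in>?runs p. run_weight \<sigma> \<iota> \<tau> w qs)"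
    unfolding behaviour_def runs using assms(1) disjoint by (simp add: sum.UNION_disjoint)
  also have "\<dots> = (\<Sum>p\<in>Q. case word_trans Q \<sigma> w p of None \<Rightarrow> 0 | Some (q, c) \<Rightarrow> \<iota> p * c * \<tau> q)"
    by (intro sum.cong refl)
      (auto simp: word_trans_eq_run_from run_weight_def run_from_nth_0 split: option.splits)
  finally show ?thesis .
qed

lemma word_trans_SomeD:
  assumes "word_trans Q \<sigma> w p = Some (q, c)"
  shows "p \<in> Q" "q \<in> Q" "c \<in> gen_subsemiring {\<sigma> p a q | p a q. p \<in> Q \<and> q \<in> Q}"
proof -
  have "p \<in> Q \<and> q \<in> Q \<and> c \<in> gen_subsemiring {\<sigma> p a q | p a q. p \<in> Q \<and> q \<in> Q}"
    using assms
  proof (induction w arbitrary: p c)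
    case (Cons a w)
    then obtain r d where "next_state Q \<sigma> p a = Some r" "word_trans Q \<sigma> w r = Some (q, d)"
      and "c = \<sigma> p a r * d"
      by (auto split: option.splits)
    moreover note next_state_SomeD[OF this(1)] Cons.IH[OF this(2)]
    moreover from this have "\<sigma> p a r \<in> gen_subsemiring {\<sigma> p a q | p a q. p \<in> Q \<and> q \<in> Q}"
      by (blast intro: gen_subsemiring.gen_base)
    ultimately show ?case
      by (auto intro: gen_subsemiring.gen_mult)
  qed (auto split: if_splits intro: gen_subsemiring.intros)
  then show "p \<in> Q" "q \<in> Q" "c \<in> gen_subsemiring {\<sigma> p a q | p a q. p \<in> Q \<and> q \<in> Q}"
    by simp_all
qed

lemma word_trans_append: "word_trans Q \<sigma> (x @ w) = wcomp (word_trans Q \<sigma> x) (word_trans Q \<sigma> w)"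
proof
  fix p show "word_trans Q \<sigma> (x @ w) p = wcomp (word_trans Q \<sigma> x) (word_trans Q \<sigma> w) p"
  proof (induction x arbitrary: p)
    case Nil
    have "word_trans Q \<sigma> w p = None" if "p \<notin> Q"
      using that word_trans_SomeD(1) by (metis not_None_eq surj_pair)
    then show ?case by (auto simp: wcomp_def option.map_ident split_def)
  next
    case (Cons a x)
    then show ?case
      by (auto simp: wcomp_def option.map_comp comp_def mult.assoc split_def split: option.splits)
  qed
qed

lemma partial_inj_word_trans:
  assumes "reversible Q \<sigma>"
  shows "partial_inj (word_trans Q \<sigma> w)"
  unfolding partial_inj_def
proof (induction w)
  case (Cons a w)
  then show ?case
    using next_state_inj[OF assms] by (fastforce split: option.splits)
qed (simp split: if_splits)

lemma finite_range_word_trans: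
  fixes \<sigma> :: "nat \<Rightarrow> 'b::finite \<Rightarrow> nat \<Rightarrow> 'a::comm_semiring_1"
  assumes "locally_finite TYPE('a)" and "finite Q"
  shows "finite (range (word_trans Q \<sigma>))"
proof -
  define G where "G = gen_subsemiring {\<sigma> p a q | p a q. p \<in> Q \<and> q \<in> Q}"
  define B where "B = insert None (Some ` (Q \<times> G))"
  have "{\<sigma> p a q | p a q. p \<in> Q \<and> q \<in> Q} = (\<lambda>(p, a, q). \<sigma> p a q) ` (Q \<times> UNIV \<times> Q)"
    by (auto simp: image_iff; blast)
  then have "finite B"
    using assms unfolding locally_finite_def B_def G_def by simp
  have "(p \<in> Q \<longrightarrow> word_trans Q \<sigma> w p \<in> B) \<and> (p \<notin> Q \<longrightarrow> word_trans Q \<sigma> w p = None)" for w p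
    using word_trans_SomeD[of Q \<sigma> w p] unfolding B_def G_def
    by (cases "word_trans Q \<sigma> w p") force+
  then have "range (word_trans Q \<sigma>) \<subseteq>
      {f. \<forall>p. (p \<in> Q \<longrightarrow> f p \<in> B) \<and> (p \<notin> Q \<longrightarrow> f p = None)}"
    by auto
  moreover have "finite \<dots>"
    using finite_set_of_finite_funs[OF assms(2) \<open>finite B\<close>] .
  ultimately show ?thesis by (rule finite_subset)
qed

lemma synt_cong_if_word_trans_eq:
  assumes "finite Q" "reversible Q \<sigma>" and "word_trans Q \<sigma> u = word_trans Q \<sigma> v"
  shows "synt_cong {w. behaviour Q \<sigma> \<iota> \<tau> w \<noteq> 0} u v"
  using assms by (simp add: synt_cong_def behaviour_eq_sum_word_trans word_trans_append)

theorem lemma3: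
  fixes L :: "('b::finite) list set"
  assumes "locally_finite TYPE('a::comm_ring_1)"
    and "L \<in> RevL TYPE('a)"
  shows "in_ECom (syntactic_monoid L)"
proof -
  obtain Q and \<sigma> :: "nat \<Rightarrow> 'b \<Rightarrow> nat \<Rightarrow> 'a" and \<iota> \<tau> where
    L: "L = {w. behaviour Q \<sigma> \<iota> \<tau> w \<noteq> 0}" and "finite Q" and rev: "reversible Q \<sigma>"
    using assms(2) unfolding RevL_def by blast
  show ?thesis
  proof (rule in_ECom_syntactic_monoidI)
    show "word_trans Q \<sigma> (x @ y) = wcomp (word_trans Q \<sigma> x) (word_trans Q \<sigma> y)" for x y
      by (rule word_trans_append)
    show "synt_cong L u v" if "word_trans Q \<sigma> u = word_trans Q \<sigma> v" for u v
      unfolding L using \<open>finite Q\<close> rev that by (rule synt_cong_if_word_trans_eq)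
    show "finite (range (word_trans Q \<sigma>))"
      using assms(1) \<open>finite Q\<close> by (rule finite_range_word_trans)
    show "wcomp e f = wcomp f e"
      if "e \<in> range (word_trans Q \<sigma>)" "f \<in> range (word_trans Q \<sigma>)"
        and "wcomp e e = e" "wcomp f f = f" for e f
      using that partial_inj_word_trans[OF rev] idempotent_partial_injs_commute by blast
  qed
qed

end
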